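(* Let $m_1,m_2\in\mathbb{N}$, $a>0$, $V\in\big[L^2((0,\infty))\big]^{m\times m}$ with $\operatorname{supp}(V)\subseteq[0,a]$. Then for each $k\ge0$ there is an $m_2\times m_1$ matrix function $\mathcal{A}_k$, integrable on $(0,(k+1)a)$ (unique a.e.), such that \[ M_{2k+1}(z;V)=\int_0^{(k+1)a}e^{2iz\alpha}\mathcal{A}_k(\alpha)\,d\alpha . \] Moreover, if $v$ is continuous and $\max_x\|v(x)\|\le c$ for some $c\in(0,\infty)$ (operator norm), then $\|\mathcal{A}_k(\alpha)\|\le c^{2k+1}f_k(\alpha)$ for a.e. $\alpha$, where $f_k(\alpha)=(-1)^{k+1}\widehat{\mathcal{A}}_k(\alpha)$ and $\widehat{\mathcal{A}}_k$ denotes the function $\mathcal{A}_k$ in the scalar case $m_1=m_2=1$ with $v=\widehat v$, $\widehat v(x)=i$ for $x\in[0,a]$ and $\widehat v(x)=0$ for $x>a$.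
   Context: $m=m_1+m_2$, $V=\begin{bmatrix}0_{m_1}&v\\ v^*&0_{m_2}\end{bmatrix}$ with $v$ an $m_1\times m_2$ matrix function. For $k\ge 0$ and $z\in\mathbb{C}_+$, $M_{2k+1}(z;V)=(-1)^{k+1}i\int_{\Omega_k} e^{2iz\alpha}\,v(x_{2k})^*v(x_{2k-1})v(x_{2k-2})^*\cdots v(x_1)v(x_0)^*\,dx_0\cdots dx_{2k}$, with $\alpha=x_{2k}-x_{2k-1}+x_{2k-2}-\cdots-x_1+x_0$ and $\Omega_k=\{0\le x_{2k}\le a;\ 0\le x_{2j-1}\le x_{2j},\ x_{2j-1}\le x_{2j-2}\le a\ (j=1,\dots,k)\}$. *)

theory Defs
  imports "HOL-Analysis.Analysis"
begin

text \<open>Matrices over complex numbers are modelled with the Cartesian type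
  complex ^ 'c ^ 'r  (rows indexed by 'r, columns by 'c).\<close>

definition cadj :: "complex ^ 'c ^ 'r \<Rightarrow> complex ^ 'r ^ 'c" where
  "cadj A = (\<chi> i j. cnj (A $ j $ i))"

definition smat :: "complex \<Rightarrow> complex ^ 'c ^ 'r \<Rightarrow> complex ^ 'c ^ 'r" where
  "smat s A = (\<chi> i j. s * A $ i $ j)"

definition opnorm :: "complex ^ 'c ^ 'r \<Rightarrow> real" where
  "opnorm A = onorm (\<lambda>x. A *v x)"

text \<open>The product  v(x_{2k})^* v(x_{2k-1}) v(x_{2k-2})^* ... v(x_1) v(x_0)^*.\<close>
fun vprod :: "(real \<Rightarrow> complex ^ 'm2 ^ 'm1) \<Rightarrow> nat \<Rightarrow> (nat \<Rightarrow> real) \<Rightarrow> complex ^ 'm1 ^ 'm2" where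
  "vprod v 0 x = cadj (v (x 0))"
| "vprod v (Suc k) x = cadj (v (x (2 * k + 2))) ** v (x (2 * k + 1)) ** vprod v k x"

definition alt :: "nat \<Rightarrow> (nat \<Rightarrow> real) \<Rightarrow> real" where
  "alt k x = (\<Sum>j\<le>2 * k. (-1) ^ j * x j)"

definition Omega :: "nat \<Rightarrow> real \<Rightarrow> (nat \<Rightarrow> real) set" where
  "Omega k a = {x. 0 \<le> x (2 * k) \<and> x (2 * k) \<le> a \<and>
     (\<forall>j\<in>{1..k}. 0 \<le> x (2 * j - 1) \<and> x (2 * j - 1) \<le> x (2 * j) \<and>
                  x (2 * j - 1) \<le> x (2 * j - 2) \<and> x (2 * j - 2) \<le> a)}"

definition Modd :: "nat \<Rightarrow> real \<Rightarrow> (real \<Rightarrow> complex ^ 'm2 ^ 'm1) \<Rightarrow> complex \<Rightarrow> complex ^ 'm1 ^ 'm2" where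
  "Modd k a v z = smat ((-1) ^ (k + 1) * \<i>)
     (LINT x | (\<Pi>\<^sub>M j\<in>{..2 * k}. (lborel :: real measure)).
        indicator (Omega k a) x *\<^sub>R smat (exp (2 * \<i> * z * complex_of_real (alt k x))) (vprod v k x))"

definition represents :: "nat \<Rightarrow> real \<Rightarrow> (real \<Rightarrow> complex ^ 'm2 ^ 'm1) \<Rightarrow> (real \<Rightarrow> complex ^ 'm1 ^ 'm2) \<Rightarrow> bool" where
  "represents k a v A \<longleftrightarrow>
     set_integrable lborel {0<..<real (k + 1) * a} A \<and>
     (\<forall>z. Im z > 0 \<longrightarrow>
        Modd k a v z = set_lebesgue_integral lborel {0<..<real (k + 1) * a}
                         (\<lambda>\<alpha>. smat (exp (2 * \<i> * z * complex_of_real \<alpha>)) (A \<alpha>)))"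

definition vhat :: "real \<Rightarrow> real \<Rightarrow> complex ^ 1 ^ 1" where
  "vhat a x = (if x \<in> {0..a} then (\<chi> i j. \<i>) else 0)"

end

theory Submission
  imports Defs "HOL-Probability.Levy"
begin

(* The shear (x_0, ..., x_2k) -> (alt k x, x_1, ..., x_2k) preserves Lebesgue measure,
   so by Fubini M_2k+1(z;V) is the transform, against exp (2 i z alpha), of the kernel
   A_k(alpha) = (-1)^(k+1) i times the integral of the matrix product over the slice
   {alt k x = alpha} of Omega_k; these slices are empty unless 0 <= alpha <= (k+1) a.
   Two representing kernels have a difference whose transform vanishes on the upper half-plane,
   hence (letting Im z -> 0) its Fourier transform vanishes, and Levy's uniqueness theorem applied
   to its positive and negative parts shows that it vanishes a.e.
   On Omega_k every factor of the product has operator norm at most c, while for vhat the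
   product is the constant -i; so (-1)^(k+1) Ahat_k(alpha) is the 2k-dimensional volume of the
   slice, and ||A_k(alpha)|| <= c^(2k+1) times that volume. *)

section \<open>Complex matrices: scaling, adjoints and operator norms\<close>

lemma bounded_bilinear_matrix_mult: "bounded_bilinear (\<lambda>(A::complex^'j^'i) (B::complex^'k^'j). A ** B)"
  unfolding bilinear_conv_bounded_bilinear[symmetric] bilinear_def
  by (auto intro!: linearI simp: vec_eq_iff matrix_matrix_mult_def sum_distrib_left
      sum_distrib_right sum.distrib scaleR_sum_right algebra_simps)

lemma bounded_linear_cadj: "bounded_linear (cadj :: complex^'c^'r \<Rightarrow> _)"
  unfolding linear_conv_bounded_linear[symmetric] by (auto intro!: linearI simp: vec_eq_iff cadj_def)

lemma bounded_linear_mult_vec_left: "bounded_linear (\<lambda>A::complex^'c^'r. A *v x)"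
  unfolding linear_conv_bounded_linear[symmetric]
  by (auto intro!: linearI simp: vec_eq_iff matrix_vector_mult_def sum.distrib scaleR_sum_right algebra_simps)

lemma norm_cscale_vec: "norm (\<chi> i. s * (x::complex^'n) $ i) = cmod s * norm x"
  unfolding norm_vec_def by (simp add: norm_mult L2_set_right_distrib)

lemma norm_smat: "norm (smat s (A::complex^'c^'r)) = cmod s * norm A"
proof -
  have "norm (smat s A $ i) = cmod s * norm (A $ i)" for i
    unfolding smat_def vec_lambda_beta by (rule norm_cscale_vec)
  then show ?thesis
    unfolding norm_vec_def[of "smat s A"] norm_vec_def[of A] by (simp add: L2_set_right_distrib)
qed

lemma smat_scaleR: "smat s (r *\<^sub>R A) = r *\<^sub>R smat s A"
  by (simp add: smat_def vec_eq_iff scaleR_conv_of_real algebra_simps)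

lemma smat_zero [simp]: "smat s 0 = 0"
  by (simp add: smat_def vec_eq_iff)

lemma smat_smat: "smat s (smat t A) = smat (s * t) A"
  by (simp add: smat_def vec_eq_iff algebra_simps)

lemma bounded_linear_smat: "bounded_linear (smat s :: complex^'c^'r \<Rightarrow> _)"
proof (rule bounded_linear_intro[where K="cmod s"])
  show "smat s (A + B) = smat s A + smat s B" for A B :: "complex^'c^'r"
    by (simp add: smat_def vec_eq_iff algebra_simps)
qed (simp_all add: smat_scaleR norm_smat mult.commute)

lemma integral_smat:
  assumes "s \<noteq> 0"
  shows "(LINT x|M. smat s (f x :: complex^'c^'r)) = smat s (integral\<^sup>L M f)"
  using assms by (intro integral_bounded_linear'[OF bounded_linear_smat bounded_linear_smat[of "1 / s"]])
    (simp add: smat_smat smat_def)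

lemma continuous_on_smat: "continuous_on UNIV (\<lambda>p. smat (fst p) (snd p :: complex^'c^'r))"
  unfolding smat_def by (intro continuous_intros)

lemma borel_measurable_smat [measurable]:
  "e \<in> borel_measurable M \<Longrightarrow> f \<in> borel_measurable M \<Longrightarrow>
    (\<lambda>x. smat (e x) (f x :: complex^'c^'r)) \<in> borel_measurable M"
  by (rule borel_measurable_continuous_Pair[OF _ _ continuous_on_smat])

lemma borel_measurable_cadj [measurable]:
  "f \<in> borel_measurable M \<Longrightarrow> (\<lambda>x. cadj (f x :: complex^'c^'r)) \<in> borel_measurable M"
  by (rule borel_measurable_continuous_on[OF linear_continuous_on[OF bounded_linear_cadj]])

lemma borel_measurable_matrix_mult [measurable]:
  assumes f: "f \<in> borel_measurable M" and g: "g \<in> borel_measurable M"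
  shows "(\<lambda>x. (f x :: complex^'j^'i) ** (g x :: complex^'k^'j)) \<in> borel_measurable M"
proof -
  have "continuous_on UNIV (\<lambda>p. fst p ** snd p :: complex^'k^'i)"
    by (rule bounded_bilinear.continuous_on[OF bounded_bilinear_matrix_mult])
      (auto intro: continuous_on_fst continuous_on_snd continuous_on_id)
  then show ?thesis by (rule borel_measurable_continuous_Pair[OF f g])
qed

lemma norm_mult_vec_le_opnorm: "norm ((A::complex^'c^'r) *v x) \<le> opnorm A * norm x"
  unfolding opnorm_def by (rule onorm[OF matrix_vector_mul_bounded_linear])

lemma opnorm_nonneg: "0 \<le> opnorm (A::complex^'c^'r)"
  unfolding opnorm_def by (rule onorm_pos_le[OF matrix_vector_mul_bounded_linear])

lemma opnorm_le:
  assumes "0 \<le> b" and "\<And>x. norm ((A::complex^'c^'r) *v x) \<le> b * norm x"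
  shows "opnorm A \<le> b"
  unfolding opnorm_def using assms by (intro onorm_bound)

lemma opnorm_zero [simp]: "opnorm (0::complex^'c^'r) = 0"
  using opnorm_le[of 0 "0::complex^'c^'r"] opnorm_nonneg[of "0::complex^'c^'r"] by simp

lemma opnorm_matrix_mult_le: "opnorm ((A::complex^'j^'i) ** (B::complex^'k^'j)) \<le> opnorm A * opnorm B"
proof (rule opnorm_le)
  show "0 \<le> opnorm A * opnorm B" by (simp add: opnorm_nonneg)
  fix x
  have "norm ((A ** B) *v x) \<le> opnorm A * norm (B *v x)"
    by (simp add: matrix_vector_mul_assoc[symmetric] norm_mult_vec_le_opnorm)
  also have "\<dots> \<le> opnorm A * (opnorm B * norm x)"
    by (intro mult_left_mono norm_mult_vec_le_opnorm opnorm_nonneg)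
  finally show "norm ((A ** B) *v x) \<le> opnorm A * opnorm B * norm x" by (simp add: mult.assoc)
qed

lemma opnorm_smat_le: "opnorm (smat s (A::complex^'c^'r)) \<le> cmod s * opnorm A"
proof (rule opnorm_le)
  show "0 \<le> cmod s * opnorm A" by (simp add: opnorm_nonneg)
  fix x
  have "smat s A *v x = (\<chi> i. s * (A *v x) $ i)"
    by (simp add: smat_def vec_eq_iff matrix_vector_mult_def sum_distrib_left algebra_simps)
  then have "norm (smat s A *v x) = cmod s * norm (A *v x)" by (simp add: norm_cscale_vec)
  also have "\<dots> \<le> cmod s * (opnorm A * norm x)"
    by (intro mult_left_mono norm_mult_vec_le_opnorm) auto
  finally show "norm (smat s A *v x) \<le> cmod s * opnorm A * norm x" by (simp add: mult.assoc)
qed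

lemma inner_cadj_mult_vec: "inner (cadj A *v y) x = inner y ((A::complex^'c^'r) *v x)"
proof -
  have inner_eq: "inner u w = Re (\<Sum>i\<in>UNIV. cnj (u $ i) * w $ i)" for u w :: "complex^'n"
    by (simp add: inner_vec_def inner_complex_def)
  have "(\<Sum>j\<in>UNIV. cnj ((cadj A *v y) $ j) * x $ j) = (\<Sum>j\<in>UNIV. \<Sum>i\<in>UNIV. A $ i $ j * cnj (y $ i) * x $ j)"
    by (simp add: cadj_def matrix_vector_mult_def sum_distrib_right)
  also have "\<dots> = (\<Sum>i\<in>UNIV. cnj (y $ i) * (A *v x) $ i)"
    by (subst sum.swap) (simp add: matrix_vector_mult_def sum_distrib_left algebra_simps)
  finally show ?thesis unfolding inner_eq by simp
qed

lemma opnorm_cadj_le: "opnorm (cadj (A::complex^'c^'r)) \<le> opnorm A"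
proof (rule opnorm_le)
  show "0 \<le> opnorm A" by (rule opnorm_nonneg)
  fix y
  let ?u = "cadj A *v y"
  have "norm ?u * norm ?u = inner y (A *v ?u)"
    by (simp add: inner_cadj_mult_vec[symmetric] power2_norm_eq_inner[symmetric] power2_eq_square)
  also have "\<dots> \<le> norm y * (opnorm A * norm ?u)"
    by (rule order_trans[OF norm_cauchy_schwarz]) (simp add: mult_left_mono norm_mult_vec_le_opnorm)
  finally have "norm ?u * norm ?u \<le> (opnorm A * norm y) * norm ?u" by (simp add: algebra_simps)
  then show "norm ?u \<le> opnorm A * norm y"
    using opnorm_nonneg[of A] by (cases "norm ?u = 0") (auto simp: mult_le_cancel_right)
qed

lemma opnorm_integral_le:
  fixes f :: "'a \<Rightarrow> complex^'c^'r"
  assumes g: "integrable M g" and bound: "\<And>x. x \<in> space M \<Longrightarrow> opnorm (f x) \<le> g x"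
  shows "opnorm (integral\<^sup>L M f) \<le> integral\<^sup>L M g"
proof -
  have g_nonneg: "0 \<le> integral\<^sup>L M g"
    using bound opnorm_nonneg order_trans by (intro integral_nonneg_AE AE_I2) blast
  show ?thesis
  proof (cases "integrable M f")
    case True
    show ?thesis
    proof (rule opnorm_le[OF g_nonneg])
      fix u
      have "norm (integral\<^sup>L M f *v u) = norm (LINT x|M. f x *v u)"
        by (simp add: integral_bounded_linear[OF bounded_linear_mult_vec_left True])
      also have "\<dots> \<le> (LINT x|M. norm (f x *v u))"
        by (rule integral_norm_bound)
      also have "\<dots> \<le> (LINT x|M. g x * norm u)"
        using True g bound
        by (intro integral_mono integrable_norm integrable_bounded_linear[OF bounded_linear_mult_vec_left]
            order_trans[OF norm_mult_vec_le_opnorm] mult_right_mono) auto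
      finally show "norm (integral\<^sup>L M f *v u) \<le> integral\<^sup>L M g * norm u" by simp
    qed
  qed (simp add: not_integrable_integral_eq g_nonneg)
qed

section \<open>Uniqueness for transforms over the upper half-plane\<close>

lemma
  fixes f :: "real \<Rightarrow> real"
  assumes f: "integrable lborel f" "\<And>x. 0 \<le> f x" and m: "integral\<^sup>L lborel f = m" "0 < m"
  shows real_distribution_normalized_density: "real_distribution (density lborel (\<lambda>x. ennreal (f x / m)))"
    and char_normalized_density:
      "char (density lborel (\<lambda>x. ennreal (f x / m))) s = (1 / m) *\<^sub>R (CLINT x|lborel. f x *\<^sub>R iexp (s * x))"
proof -
  have [measurable]: "f \<in> borel_measurable lborel" using f by auto
  have "(\<integral>\<^sup>+x. ennreal (f x / m) \<partial>lborel) = ennreal (LINT x|lborel. f x / m)"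
    using f m by (intro nn_integral_eq_integral) auto
  then have "emeasure (density lborel (\<lambda>x. ennreal (f x / m))) UNIV = 1"
    using m by (simp add: emeasure_density)
  then have "prob_space (density lborel (\<lambda>x. ennreal (f x / m)))"
    by (intro prob_spaceI) simp
  then show "real_distribution (density lborel (\<lambda>x. ennreal (f x / m)))"
    by (simp add: real_distribution_def real_distribution_axioms_def)
  show "char (density lborel (\<lambda>x. ennreal (f x / m))) s = (1 / m) *\<^sub>R (CLINT x|lborel. f x *\<^sub>R iexp (s * x))"
    unfolding char_def using f m by (subst integral_density) (auto simp flip: integral_scaleR_right simp: divide_inverse_commute)
qed

lemma fourier_uniqueness_real:
  fixes r :: "real \<Rightarrow> real"
  assumes r: "integrable lborel r" and transform: "\<And>s. (CLINT x|lborel. r x *\<^sub>R iexp (s * x)) = 0"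
  shows "AE x in lborel. r x = 0"
proof -
  \<comment> \<open>Normalised, the positive and negative parts of \<open>r\<close> are probability densities with the same
    characteristic function.\<close>
  define p where "p x = max (r x) 0" for x
  define q where "q x = max (- r x) 0" for x
  have p: "integrable lborel p" and q: "integrable lborel q"
    unfolding p_def q_def using r by (auto intro!: integrable_max)
  have p_nonneg: "0 \<le> p x" and q_nonneg: "0 \<le> q x" for x by (auto simp: p_def q_def)
  have r_eq: "r x = p x - q x" for x by (auto simp: p_def q_def)
  have transform_eq: "(CLINT x|lborel. p x *\<^sub>R iexp (s * x)) = (CLINT x|lborel. q x *\<^sub>R iexp (s * x))" for s
  proof -
    have "integrable lborel (\<lambda>x. f x *\<^sub>R iexp (s * x))" if "integrable lborel f" for f
      using that by (intro Bochner_Integration.integrable_bound[OF that]) (auto simp: norm_exp_eq_Re)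
    then show ?thesis
      using transform[of s] p q by (simp add: r_eq scaleR_left_diff_distrib)
  qed
  define m where "m = integral\<^sup>L lborel p"
  have q_integral: "integral\<^sup>L lborel q = m"
    using transform_eq[of 0] by (simp add: m_def scaleR_conv_of_real)
  have "0 \<le> m" unfolding m_def using p_nonneg by simp
  then consider "m = 0" | "m > 0" by linarith
  then show ?thesis
  proof cases
    case 1
    have "AE x in lborel. p x = 0"
      using 1 p p_nonneg by (simp add: m_def integral_nonneg_eq_0_iff_AE)
    moreover have "AE x in lborel. q x = 0"
      using 1 q_integral q q_nonneg by (simp add: integral_nonneg_eq_0_iff_AE)
    ultimately show ?thesis by eventually_elim (simp add: r_eq)
  next
    case 2
    have "density lborel (\<lambda>x. ennreal (p x / m)) = density lborel (\<lambda>x. ennreal (q x / m))"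
      using p q p_nonneg q_nonneg q_integral 2 transform_eq
      by (intro Levy_uniqueness real_distribution_normalized_density ext)
        (simp_all add: char_normalized_density m_def)
    then have "AE x in lborel. ennreal (p x / m) = ennreal (q x / m)"
      using p q by (intro sigma_finite_measure.density_unique[OF sigma_finite_lborel]) auto
    then show ?thesis
      by eventually_elim (use 2 p_nonneg q_nonneg in \<open>simp add: r_eq ennreal_inj\<close>)
  qed
qed

lemma fourier_uniqueness:
  fixes u :: "real \<Rightarrow> complex"
  assumes u: "integrable lborel u" and transform: "\<And>s. (CLINT x|lborel. iexp (s * x) * u x) = 0"
  shows "AE x in lborel. u x = 0"
proof -
  have integrable: "integrable lborel (\<lambda>x. iexp (s * x) * u x)" for s
    using u by (intro Bochner_Integration.integrable_bound[OF u]) (auto simp: norm_exp_eq_Re norm_mult)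
  have Re_zero: "AE x in lborel. Re (c * u x) = 0" for c
  proof (rule fourier_uniqueness_real)
    show "integrable lborel (\<lambda>x. Re (c * u x))" using u by simp
    fix s
    have "Re (c * u x) *\<^sub>R iexp (s * x) = (c * (iexp (s * x) * u x) + cnj c * cnj (iexp (- s * x) * u x)) / 2" for x
      by (simp add: complex_eq_iff exp_cnj algebra_simps)
    then have "(CLINT x|lborel. Re (c * u x) *\<^sub>R iexp (s * x))
        = (c * (CLINT x|lborel. iexp (s * x) * u x) + cnj c * cnj (CLINT x|lborel. iexp (- s * x) * u x)) / 2"
      using integrable[of s] integrable[of "- s"]
      by (simp only: integral_divide_zero integral_mult_right_zero Bochner_Integration.integral_cnj
          Bochner_Integration.integral_add integrable_mult_right complex_integrable_cnj)
    then show "(CLINT x|lborel. Re (c * u x) *\<^sub>R iexp (s * x)) = 0"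
      by (simp only: transform) simp
  qed
  show ?thesis
    using Re_zero[of 1] Re_zero[of "- \<i>"] by eventually_elim (simp add: complex_eq_iff)
qed

lemma norm_exp_upper_half_plane_le:
  assumes "0 \<le> x" and "0 \<le> Im z"
  shows "cmod (exp (2 * \<i> * z * complex_of_real x)) \<le> 1"
  using assms by (simp add: norm_exp_eq_Re mult_nonneg_nonneg)

lemma upper_half_plane_transform_uniqueness:
  fixes u :: "real \<Rightarrow> complex"
  assumes u: "integrable lborel u" and u_neg: "\<And>x. x < 0 \<Longrightarrow> u x = 0"
    and transform: "\<And>z. Im z > 0 \<Longrightarrow> (CLINT x|lborel. exp (2 * \<i> * z * complex_of_real x) * u x) = 0"
  shows "AE x in lborel. u x = 0"
proof (rule fourier_uniqueness[OF u])
  fix s :: real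
  have [measurable]: "u \<in> borel_measurable lborel" using u by auto
  define z where "z n = complex_of_real (s / 2) + \<i> * complex_of_real (inverse (Suc n))" for n
  have Im_z: "Im (z n) > 0" for n by (simp add: z_def)
  have "z \<longlonglongrightarrow> complex_of_real (s / 2) + \<i> * complex_of_real 0"
    unfolding z_def by (intro tendsto_intros LIMSEQ_inverse_real_of_nat)
  then have z_lim: "z \<longlonglongrightarrow> complex_of_real (s / 2)" by simp
  have "(\<lambda>n. CLINT x|lborel. exp (2 * \<i> * z n * complex_of_real x) * u x)
      \<longlonglongrightarrow> (CLINT x|lborel. exp (2 * \<i> * complex_of_real (s / 2) * complex_of_real x) * u x)"
  proof (rule integral_dominated_convergence[where w="\<lambda>x. norm (u x)"])
    show "AE x in lborel. (\<lambda>n. exp (2 * \<i> * z n * complex_of_real x) * u x)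
        \<longlonglongrightarrow> exp (2 * \<i> * complex_of_real (s / 2) * complex_of_real x) * u x"
      using z_lim by (intro AE_I2 tendsto_intros)
    show "AE x in lborel. norm (exp (2 * \<i> * z n * complex_of_real x) * u x) \<le> norm (u x)" for n
    proof (intro AE_I2)
      fix x :: real
      show "norm (exp (2 * \<i> * z n * complex_of_real x) * u x) \<le> norm (u x)"
        using norm_exp_upper_half_plane_le[of x "z n"] Im_z[of n]
        by (cases "x < 0") (auto simp: u_neg norm_mult intro!: mult_left_le_one_le)
    qed
  qed (use u in auto)
  moreover have "(CLINT x|lborel. exp (2 * \<i> * z n * complex_of_real x) * u x) = 0" for n
    using transform[OF Im_z] .
  ultimately show "(CLINT x|lborel. iexp (s * x) * u x) = 0"
    by (simp add: LIMSEQ_const_iff mult.commute mult.left_commute)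
qed

lemma set_integrable_smat_exp:
  fixes F :: "real \<Rightarrow> complex^'c^'r"
  assumes F: "set_integrable lborel S F" and S: "S \<subseteq> {0..}" and z: "0 \<le> Im z"
  shows "set_integrable lborel S (\<lambda>x. smat (exp (2 * \<i> * z * complex_of_real x)) (F x))"
  unfolding set_integrable_def
proof (rule Bochner_Integration.integrable_bound[OF F[unfolded set_integrable_def]])
  have [measurable]: "(\<lambda>x. indicator S x *\<^sub>R F x) \<in> borel_measurable lborel"
    using F by (auto simp: set_integrable_def)
  show "(\<lambda>x. indicator S x *\<^sub>R smat (exp (2 * \<i> * z * complex_of_real x)) (F x)) \<in> borel_measurable lborel"
    by (simp add: smat_scaleR[symmetric])
  show "AE x in lborel. norm (indicator S x *\<^sub>R smat (exp (2 * \<i> * z * complex_of_real x)) (F x))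
      \<le> norm (indicator S x *\<^sub>R F x)"
  proof (intro AE_I2)
    fix x
    show "norm (indicator S x *\<^sub>R smat (exp (2 * \<i> * z * complex_of_real x)) (F x)) \<le> norm (indicator S x *\<^sub>R F x)"
      using norm_exp_upper_half_plane_le[of x z] S z
      by (cases "x \<in> S") (auto simp: norm_smat intro!: mult_left_le_one_le)
  qed
qed

lemma set_transform_uniqueness:
  fixes h :: "real \<Rightarrow> complex^'c^'r"
  assumes h: "set_integrable lborel S h" and S: "S \<subseteq> {0..}"
    and transform: "\<And>z. Im z > 0 \<Longrightarrow>
      set_lebesgue_integral lborel S (\<lambda>x. smat (exp (2 * \<i> * z * complex_of_real x)) (h x)) = 0"
  shows "AE x in lborel. x \<in> S \<longrightarrow> h x = 0"
proof -
  define H where "H x = indicator S x *\<^sub>R h x" for x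
  have H: "integrable lborel H" using h unfolding set_integrable_def H_def[abs_def] .
  have entry: "bounded_linear (\<lambda>A::complex^'c^'r. A $ i $ j)" for i j
    using bounded_linear_compose[OF bounded_linear_vec_nth bounded_linear_vec_nth] .
  have "AE x in lborel. H x $ i $ j = 0" for i j
  proof (rule upper_half_plane_transform_uniqueness)
    show "integrable lborel (\<lambda>x. H x $ i $ j)" by (rule integrable_bounded_linear[OF entry H])
    show "H x $ i $ j = 0" if "x < 0" for x using that S by (auto simp: H_def indicator_def)
    fix z :: complex assume z: "Im z > 0"
    have "(CLINT x|lborel. exp (2 * \<i> * z * complex_of_real x) * H x $ i $ j)
        = (LINT x|lborel. indicator S x *\<^sub>R smat (exp (2 * \<i> * z * complex_of_real x)) (h x)) $ i $ j"
      using set_integrable_smat_exp[OF h S, of z] z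
      by (subst integral_bounded_linear[OF entry, symmetric])
        (auto simp: set_integrable_def H_def smat_def scaleR_conv_of_real algebra_simps)
    also have "\<dots> = 0" using transform[OF z] by (simp add: set_lebesgue_integral_def)
    finally show "(CLINT x|lborel. exp (2 * \<i> * z * complex_of_real x) * H x $ i $ j) = 0" .
  qed
  then have "AE x in lborel. \<forall>i j. H x $ i $ j = 0"
    by (subst AE_all_countable, intro allI, subst AE_all_countable) auto
  then show ?thesis
    by eventually_elim (auto simp: H_def vec_eq_iff)
qed

lemma represents_unique:
  assumes A: "represents k a v A" and B: "represents k a v B"
  shows "AE t in lborel. t \<in> {0<..<real (k + 1) * a} \<longrightarrow> B t = A t"
proof -
  let ?S = "{0<..<real (k + 1) * a}"
  have "AE t in lborel. t \<in> ?S \<longrightarrow> B t - A t = 0"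
  proof (rule set_transform_uniqueness)
    show "set_integrable lborel ?S (\<lambda>t. B t - A t)"
      using A B by (auto simp: represents_def)
    fix z :: complex assume z: "Im z > 0"
    let ?E = "\<lambda>t. exp (2 * \<i> * z * complex_of_real t)"
    have "set_integrable lborel ?S (\<lambda>t. smat (?E t) (A t))" "set_integrable lborel ?S (\<lambda>t. smat (?E t) (B t))"
      using A B z by (auto simp: represents_def intro!: set_integrable_smat_exp)
    then show "set_lebesgue_integral lborel ?S (\<lambda>t. smat (?E t) (B t - A t)) = 0"
      using A B z by (simp add: represents_def linear_diff[OF bounded_linear.linear[OF bounded_linear_smat]] set_integral_diff)
  qed auto
  then show ?thesis by simp
qed

section \<open>Shearing one coordinate of a product of Lebesgue measures\<close>

lemma emeasure_lborel_translate_vimage: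
  assumes "B \<in> sets borel"
  shows "emeasure lborel ((\<lambda>t::real. t - c) -` B) = emeasure lborel B"
proof -
  have "emeasure lborel B = emeasure (distr lborel borel ((+) (- c))) B"
    by (simp add: lborel_distr_plus)
  also have "\<dots> = emeasure lborel ((+) (- c) -` B)"
    using assms by (subst emeasure_distr) auto
  also have "(+) (- c) = (\<lambda>t. t - c)" by auto
  finally show ?thesis ..
qed

lemma measurable_PiM_insert_shear:
  fixes r :: "('i \<Rightarrow> real) \<Rightarrow> real"
  assumes "i \<notin> J" and r: "r \<in> borel_measurable (Pi\<^sub>M J (\<lambda>_. lborel))"
  shows "(\<lambda>(t, y). y(i := t - r y)) \<in> lborel \<Otimes>\<^sub>M Pi\<^sub>M J (\<lambda>_. lborel) \<rightarrow>\<^sub>M Pi\<^sub>M (insert i J) (\<lambda>_. lborel)"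
proof (rule measurable_PiM_single')
  fix j assume "j \<in> insert i J"
  then show "(\<lambda>p. (case p of (t, y) \<Rightarrow> y(i := t - r y)) j) \<in> lborel \<Otimes>\<^sub>M Pi\<^sub>M J (\<lambda>_. lborel) \<rightarrow>\<^sub>M lborel"
    using r by (cases "j = i") (auto simp: case_prod_beta)
next
  show "(\<lambda>(t, y). y(i := t - r y)) \<in> space (lborel \<Otimes>\<^sub>M Pi\<^sub>M J (\<lambda>_. lborel)) \<rightarrow> (\<Pi>\<^sub>E j\<in>insert i J. space lborel)"
    by (auto simp: space_pair_measure space_PiM PiE_def extensional_def)
qed

lemma distr_PiM_insert_shear:
  fixes r :: "('i \<Rightarrow> real) \<Rightarrow> real"
  assumes J: "finite J" "i \<notin> J" and r: "r \<in> borel_measurable (Pi\<^sub>M J (\<lambda>_. lborel))"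
  shows "distr (lborel \<Otimes>\<^sub>M Pi\<^sub>M J (\<lambda>_. lborel)) (Pi\<^sub>M (insert i J) (\<lambda>_. lborel)) (\<lambda>(t, y). y(i := t - r y))
    = Pi\<^sub>M (insert i J) (\<lambda>_. lborel)"
    (is "distr ?L ?P ?f = ?P")
proof -
  let ?N = "Pi\<^sub>M J (\<lambda>_. lborel :: real measure)"
  interpret product_sigma_finite "\<lambda>_::'i. lborel :: real measure" by standard
  interpret P: pair_sigma_finite lborel ?N
    by (simp add: pair_sigma_finite_def sigma_finite_lborel sigma_finite J)
  have f: "?f \<in> ?L \<rightarrow>\<^sub>M ?P" using measurable_PiM_insert_shear[OF J(2) r] .
  show ?thesis
  proof (rule PiM_eqI)
    fix A :: "'i \<Rightarrow> real set" assume A: "\<And>j. j \<in> insert i J \<Longrightarrow> A j \<in> sets lborel"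
    let ?S = "?f -` Pi\<^sub>E (insert i J) A \<inter> space ?L"
    have S: "?S \<in> sets ?L"
      using A J by (intro measurable_sets[OF f] sets_PiM_I_finite) auto
    have "emeasure (distr ?L ?P ?f) (Pi\<^sub>E (insert i J) A) = emeasure ?L ?S"
      using A J by (subst emeasure_distr[OF f]) (auto intro!: sets_PiM_I_finite)
    also have "\<dots> = (\<integral>\<^sup>+y. emeasure lborel ((\<lambda>t. (t, y)) -` ?S) \<partial>?N)"
      by (rule P.emeasure_pair_measure_alt2[OF S])
    also have "\<dots> = (\<integral>\<^sup>+y. emeasure lborel (A i) * indicator (Pi\<^sub>E J A) y \<partial>?N)"
    proof (rule nn_integral_cong)
      fix y assume "y \<in> space ?N"
      then have "(\<lambda>t. (t, y)) -` ?S = (if y \<in> Pi\<^sub>E J A then (\<lambda>t. t - r y) -` A i else {})"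
        using J by (auto simp: space_pair_measure space_PiM PiE_iff extensional_def split: if_splits)
      then show "emeasure lborel ((\<lambda>t. (t, y)) -` ?S) = emeasure lborel (A i) * indicator (Pi\<^sub>E J A) y"
        using A[of i] by (simp add: emeasure_lborel_translate_vimage)
    qed
    also have "\<dots> = emeasure lborel (A i) * emeasure ?N (Pi\<^sub>E J A)"
      using A J by (subst nn_integral_cmult_indicator) (auto intro!: sets_PiM_I_finite)
    also have "\<dots> = (\<Prod>j\<in>insert i J. emeasure lborel (A j))"
      using A J by (simp add: emeasure_PiM)
    finally show "emeasure (distr ?L ?P ?f) (Pi\<^sub>E (insert i J) A) = (\<Prod>j\<in>insert i J. emeasure lborel (A j))" .
  qed (use J in simp_all)
qed

lemma
  fixes r :: "('i \<Rightarrow> real) \<Rightarrow> real" and F :: "('i \<Rightarrow> real) \<Rightarrow> 'b::{banach, second_countable_topology}"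
  assumes J: "finite J" "i \<notin> J" and r: "r \<in> borel_measurable (Pi\<^sub>M J (\<lambda>_. lborel))"
    and F: "integrable (Pi\<^sub>M (insert i J) (\<lambda>_. lborel)) F"
  shows integral_PiM_insert_shear: "integral\<^sup>L (Pi\<^sub>M (insert i J) (\<lambda>_. lborel)) F
      = (LINT t|lborel. LINT y|Pi\<^sub>M J (\<lambda>_. lborel). F (y(i := t - r y)))"
    and integrable_PiM_insert_shear: "integrable lborel (\<lambda>t. LINT y|Pi\<^sub>M J (\<lambda>_. lborel). F (y(i := t - r y)))"
proof -
  let ?N = "Pi\<^sub>M J (\<lambda>_. lborel :: real measure)"
  let ?f = "\<lambda>(t, y). y(i := t - r y)"
  interpret product_sigma_finite "\<lambda>_::'i. lborel :: real measure" by standard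
  interpret P: pair_sigma_finite lborel ?N
    by (simp add: pair_sigma_finite_def sigma_finite_lborel sigma_finite J)
  note f = measurable_PiM_insert_shear[OF J(2) r]
  have F_meas: "F \<in> borel_measurable (Pi\<^sub>M (insert i J) (\<lambda>_. lborel))" using F by auto
  have F_shear: "integrable (lborel \<Otimes>\<^sub>M ?N) (\<lambda>p. F (?f p))"
    using F integrable_distr_eq[OF f F_meas] by (simp add: distr_PiM_insert_shear[OF J r])
  have "integral\<^sup>L (Pi\<^sub>M (insert i J) (\<lambda>_. lborel)) F = integral\<^sup>L (lborel \<Otimes>\<^sub>M ?N) (\<lambda>p. F (?f p))"
    by (subst distr_PiM_insert_shear[OF J r, symmetric]) (rule integral_distr[OF f F_meas])
  then show "integral\<^sup>L (Pi\<^sub>M (insert i J) (\<lambda>_. lborel)) F = (LINT t|lborel. LINT y|?N. F (y(i := t - r y)))"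
    using P.integral_fst'[OF F_shear] by simp
  show "integrable lborel (\<lambda>t. LINT y|?N. F (y(i := t - r y)))"
    using P.integrable_fst'[OF F_shear] by simp
qed

lemma integrable_PiM_prod_bound:
  fixes F :: "('i \<Rightarrow> real) \<Rightarrow> 'b::{banach, second_countable_topology}"
  assumes I: "finite I" and F: "F \<in> borel_measurable (Pi\<^sub>M I (\<lambda>_. lborel))"
    and h: "integrable lborel h" and bound: "\<And>x. norm (F x) \<le> C * (\<Prod>j\<in>I. h (x j))"
  shows "integrable (Pi\<^sub>M I (\<lambda>_. lborel)) F"
proof (rule Bochner_Integration.integrable_bound[OF _ F])
  interpret product_sigma_finite "\<lambda>_::'i. lborel :: real measure" by standard
  show "integrable (Pi\<^sub>M I (\<lambda>_. lborel)) (\<lambda>x. C * (\<Prod>j\<in>I. h (x j)))"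
    using h by (intro integrable_mult_right product_integrable_prod I)
  show "AE x in Pi\<^sub>M I (\<lambda>_. lborel). norm (F x) \<le> norm (C * (\<Prod>j\<in>I. h (x j)))"
    using bound by (intro AE_I2) (metis real_norm_def abs_ge_self order_trans)
qed

section \<open>Slicing \<open>\<Omega>\<^sub>k\<close> along the alternating sum\<close>

definition alt_param :: "nat \<Rightarrow> real \<Rightarrow> (nat \<Rightarrow> real) \<Rightarrow> nat \<Rightarrow> real" where
  "alt_param k t y = y(0 := t - (\<Sum>j\<in>{1..2 * k}. (-1) ^ j * y j))"

lemma atMost_double_eq_insert_0: "{..2 * k} = insert 0 {1..2 * k :: nat}"
  by auto

lemma alt_alt_param [simp]: "alt k (alt_param k t y) = t"
  unfolding alt_def alt_param_def atMost_double_eq_insert_0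
  by (subst sum.insert) (auto intro!: sum.cong)

lemma borel_measurable_alt_tail:
  "(\<lambda>y. \<Sum>j\<in>{1..2 * k}. (-1) ^ j * y j :: real) \<in> borel_measurable (\<Pi>\<^sub>M j\<in>{1..2 * k}. lborel)"
  by measurable

lemma measurable_alt_param:
  "alt_param k t \<in> (\<Pi>\<^sub>M j\<in>{1..2 * k}. lborel) \<rightarrow>\<^sub>M (\<Pi>\<^sub>M j\<in>{..2 * k}. lborel)"
proof -
  have "(\<lambda>y. (\<lambda>(t, y). y(0 := t - (\<Sum>j\<in>{1..2 * k}. (-1) ^ j * y j))) (t, y))
      \<in> (\<Pi>\<^sub>M j\<in>{1..2 * k}. lborel) \<rightarrow>\<^sub>M (\<Pi>\<^sub>M j\<in>insert 0 {1..2 * k}. lborel)"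
    by (rule measurable_compose[OF measurable_Pair1' measurable_PiM_insert_shear[OF _ borel_measurable_alt_tail]]) auto
  then show ?thesis
    by (simp add: alt_param_def[abs_def] atMost_double_eq_insert_0)
qed

lemma
  fixes F :: "(nat \<Rightarrow> real) \<Rightarrow> 'b::{banach, second_countable_topology}"
  assumes F: "integrable (\<Pi>\<^sub>M j\<in>{..2 * k}. lborel) F"
  shows integral_alt_slices: "integral\<^sup>L (\<Pi>\<^sub>M j\<in>{..2 * k}. lborel) F
      = (LINT t|lborel. LINT y|(\<Pi>\<^sub>M j\<in>{1..2 * k}. lborel). F (alt_param k t y))"
    and integrable_alt_slices: "integrable lborel (\<lambda>t. LINT y|(\<Pi>\<^sub>M j\<in>{1..2 * k}. lborel). F (alt_param k t y))"
proof -
  note r = borel_measurable_alt_tail[of k]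
  note F' = F[unfolded atMost_double_eq_insert_0]
  show "integral\<^sup>L (\<Pi>\<^sub>M j\<in>{..2 * k}. lborel) F
      = (LINT t|lborel. LINT y|(\<Pi>\<^sub>M j\<in>{1..2 * k}. lborel). F (alt_param k t y))"
    unfolding atMost_double_eq_insert_0 alt_param_def by (rule integral_PiM_insert_shear[OF _ _ r F']) auto
  show "integrable lborel (\<lambda>t. LINT y|(\<Pi>\<^sub>M j\<in>{1..2 * k}. lborel). F (alt_param k t y))"
    unfolding alt_param_def by (rule integrable_PiM_insert_shear[OF _ _ r F']) auto
qed

lemma atMost_double_Suc: "{..2 * Suc k} = insert (2 * k + 2) (insert (2 * k + 1) {..2 * k})"
  by auto

lemma alt_Suc: "alt (Suc k) x = alt k x - x (2 * k + 1) + x (2 * k + 2)"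
  unfolding alt_def atMost_double_Suc by simp

lemma Omega_SucD:
  assumes "x \<in> Omega (Suc k) a"
  shows "x \<in> Omega k a" and "0 \<le> x (2 * k + 1)" "x (2 * k + 1) \<le> x (2 * k)"
    "x (2 * k + 1) \<le> x (2 * k + 2)" "x (2 * k + 2) \<le> a"
proof -
  have clause: "0 \<le> x (2 * j - 1) \<and> x (2 * j - 1) \<le> x (2 * j) \<and> x (2 * j - 1) \<le> x (2 * j - 2) \<and> x (2 * j - 2) \<le> a"
    if "j \<in> {1..Suc k}" for j
    using assms that unfolding Omega_def by blast
  from clause[of "Suc k"] assms show "0 \<le> x (2 * k + 1)" "x (2 * k + 1) \<le> x (2 * k)"
      "x (2 * k + 1) \<le> x (2 * k + 2)" "x (2 * k + 2) \<le> a"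
    by (auto simp: Omega_def)
  from clause[of "Suc k"] clause show "x \<in> Omega k a"
    unfolding Omega_def by auto
qed

lemma Omega_bounds:
  assumes "x \<in> Omega k a"
  shows "j \<le> 2 * k \<Longrightarrow> x j \<in> {0..a}" and "alt k x \<in> {0..real (k + 1) * a}"
  using assms
proof (induction k arbitrary: j)
  case 0
  { case 1 then show ?case by (auto simp: Omega_def) }
  { case 2 then show ?case by (auto simp: Omega_def alt_def) }
next
  case (Suc k)
  { case 1
    then show ?case using Suc.IH(1)[of j] Omega_SucD[OF 1(2)]
      by (cases "j \<le> 2 * k") (auto simp: le_Suc_eq numeral_2_eq_2) }
  { case 2
    then show ?case using Suc.IH(2) Omega_SucD[OF 2] by (auto simp: alt_Suc algebra_simps) }
qed

lemma measurable_Omega [measurable]: "Measurable.pred (\<Pi>\<^sub>M j\<in>{..2 * k}. lborel) (\<lambda>x. x \<in> Omega k a)"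
proof -
  let ?M = "\<Pi>\<^sub>M j\<in>{..2 * k}. lborel :: real measure"
  have coord: "(\<lambda>x. x j) \<in> borel_measurable ?M" if "j \<le> 2 * k" for j
    using that measurable_component_singleton[of j "{..2 * k}" "\<lambda>_. lborel"] by simp
  have le: "Measurable.pred ?M (\<lambda>x. f x \<le> g x)" if "f \<in> borel_measurable ?M" "g \<in> borel_measurable ?M" for f g :: "_ \<Rightarrow> real"
    unfolding pred_def by (rule borel_measurable_le[OF that])
  show ?thesis
    unfolding Omega_def mem_Collect_eq
    by (intro pred_intros_logic pred_intros_finite le coord borel_measurable_const) auto
qed

lemma measurable_vprod:
  assumes w: "w \<in> borel_measurable lborel" and I: "{..2 * k} \<subseteq> I"
  shows "vprod w k \<in> borel_measurable (\<Pi>\<^sub>M j\<in>I. lborel)"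
proof -
  have coord: "(\<lambda>x. w (x j)) \<in> borel_measurable (\<Pi>\<^sub>M j\<in>I. lborel)" if "j \<in> I" for j
    using measurable_compose[OF measurable_component_singleton[OF that] w] by simp
  show ?thesis
    using I
  proof (induction k)
    case 0
    have "vprod w 0 = (\<lambda>x. cadj (w (x 0)))" by auto
    then show ?case using 0 by (auto intro!: borel_measurable_cadj coord)
  next
    case (Suc k)
    have "vprod w (Suc k) = (\<lambda>x. cadj (w (x (2 * k + 2))) ** w (x (2 * k + 1)) ** vprod w k x)" by auto
    moreover have "vprod w k \<in> borel_measurable (\<Pi>\<^sub>M j\<in>I. lborel)"
      using Suc by (intro Suc.IH) auto
    ultimately show ?case
      using Suc.prems by (auto intro!: borel_measurable_cadj borel_measurable_matrix_mult coord)
  qed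
qed

lemma vprod_cong: "(\<And>j. j \<le> 2 * k \<Longrightarrow> v (x j) = w (x j)) \<Longrightarrow> vprod v k x = vprod w k x"
  by (induction k) auto

lemma vprod_opnorm_le: "opnorm (vprod w k x) \<le> (\<Prod>j\<le>2 * k. opnorm (w (x j)))"
proof (induction k)
  case 0
  then show ?case by (simp add: opnorm_cadj_le)
next
  case (Suc k)
  let ?w = "\<lambda>j. w (x j)"
  have "opnorm (vprod w (Suc k) x) \<le> opnorm (cadj (?w (2 * k + 2))) * opnorm (?w (2 * k + 1)) * opnorm (vprod w k x)"
    by simp (meson opnorm_matrix_mult_le opnorm_nonneg mult_right_mono order_trans)
  also have "\<dots> \<le> opnorm (?w (2 * k + 2)) * opnorm (?w (2 * k + 1)) * (\<Prod>j\<le>2 * k. opnorm (?w j))"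
    using Suc.IH by (intro mult_mono opnorm_cadj_le) (auto simp: opnorm_nonneg)
  finally show ?case by (simp add: atMost_double_Suc mult_ac)
qed

lemma vprod_norm_le: "\<exists>C. \<forall>x. norm (vprod (w :: real \<Rightarrow> complex^'m2^'m1) k x) \<le> C * (\<Prod>j\<le>2 * k. norm (w (x j)))"
proof (induction k)
  case 0
  obtain K where "\<And>A::complex^'m2^'m1. norm (cadj A) \<le> norm A * K"
    using bounded_linear.bounded[OF bounded_linear_cadj] by blast
  then show ?case by (auto simp: mult.commute)
next
  case (Suc k)
  then obtain C where C: "\<And>x. norm (vprod w k x) \<le> C * (\<Prod>j\<le>2 * k. norm (w (x j)))" by blast
  obtain K where K: "\<And>A::complex^'m2^'m1. norm (cadj A) \<le> norm A * K" and "K \<ge> 0"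
    using bounded_linear.nonneg_bounded[OF bounded_linear_cadj] by blast
  obtain K1 where K1: "\<And>A (B::complex^'m2^'m1). norm ((A::complex^'m1^'m2) ** B) \<le> norm A * norm B * K1" and "K1 \<ge> 0"
    using bounded_bilinear.nonneg_bounded[OF bounded_bilinear_matrix_mult] by blast
  obtain K2 where K2: "\<And>A (B::complex^'m1^'m2). norm ((A::complex^'m2^'m2) ** B) \<le> norm A * norm B * K2" and "K2 \<ge> 0"
    using bounded_bilinear.nonneg_bounded[OF bounded_bilinear_matrix_mult] by blast
  have "norm (vprod w (Suc k) x) \<le> (K2 * K1 * K * C) * (\<Prod>j\<le>2 * Suc k. norm (w (x j)))" for x
  proof -
    let ?w = "\<lambda>j. w (x j)"
    have "norm (vprod w (Suc k) x) \<le> norm (cadj (?w (2 * k + 2)) ** ?w (2 * k + 1)) * norm (vprod w k x) * K2"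
      using K2 by simp
    also have "\<dots> \<le> (norm (?w (2 * k + 2)) * K * norm (?w (2 * k + 1)) * K1) * (C * (\<Prod>j\<le>2 * k. norm (?w j))) * K2"
      using K K1 C \<open>K \<ge> 0\<close> \<open>K1 \<ge> 0\<close> \<open>K2 \<ge> 0\<close>
      by (intro mult_right_mono mult_mono order_trans[OF K1] mult_right_mono) auto
    finally show ?thesis by (simp add: atMost_double_Suc algebra_simps)
  qed
  then show ?case by blast
qed

section \<open>The representing kernel\<close>

definition kernel :: "real \<Rightarrow> (real \<Rightarrow> complex^'m2^'m1) \<Rightarrow> nat \<Rightarrow> real \<Rightarrow> complex^'m1^'m2" where
  "kernel a w k t = smat ((-1) ^ (k + 1) * \<i>)
     (LINT y|(\<Pi>\<^sub>M j\<in>{1..2 * k}. lborel). indicator (Omega k a) (alt_param k t y) *\<^sub>R vprod w k (alt_param k t y))"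

lemma integrable_Omega_vprod:
  assumes w: "w \<in> borel_measurable lborel" "integrable lborel (\<lambda>t. norm (w t))"
  shows "integrable (\<Pi>\<^sub>M j\<in>{..2 * k}. lborel) (\<lambda>x. indicator (Omega k a) x *\<^sub>R vprod w k x)"
proof -
  obtain C where C: "\<And>x. norm (vprod w k x) \<le> C * (\<Prod>j\<le>2 * k. norm (w (x j)))"
    using vprod_norm_le by blast
  show ?thesis
  proof (rule integrable_PiM_prod_bound[OF _ _ w(2)])
    show "(\<lambda>x. indicator (Omega k a) x *\<^sub>R vprod w k x) \<in> borel_measurable (\<Pi>\<^sub>M j\<in>{..2 * k}. lborel)"
      using measurable_vprod[OF w(1) order_refl] by measurable
    show "norm (indicator (Omega k a) x *\<^sub>R vprod w k x) \<le> C * (\<Prod>j\<le>2 * k. norm (w (x j)))" for x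
      using C[of x] order_trans[OF norm_ge_zero C[of x]] by (auto simp: indicator_def)
  qed auto
qed

lemma integrable_kernel:
  assumes w: "w \<in> borel_measurable lborel" "integrable lborel (\<lambda>t. norm (w t))"
  shows "integrable lborel (kernel a w k)"
  unfolding kernel_def[abs_def]
  by (intro integrable_bounded_linear[OF bounded_linear_smat] integrable_alt_slices integrable_Omega_vprod w)

lemma kernel_eq_0:
  assumes "t \<notin> {0..real (k + 1) * a}"
  shows "kernel a w k t = 0"
proof -
  have "alt_param k t y \<notin> Omega k a" for y
    using Omega_bounds(2)[of "alt_param k t y" k a] assms by auto
  then show ?thesis by (simp add: kernel_def)
qed

lemma Modd_eq_kernel_transform:
  assumes w: "w \<in> borel_measurable lborel" "integrable lborel (\<lambda>t. norm (w t))"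
    and v_eq_w: "\<And>t. t \<in> {0..a} \<Longrightarrow> v t = w t" and z: "0 \<le> Im z"
  shows "Modd k a v z = (LINT t|lborel. smat (exp (2 * \<i> * z * complex_of_real t)) (kernel a w k t))"
proof -
  let ?E = "\<lambda>t. exp (2 * \<i> * z * complex_of_real t)"
  let ?c = "(-1) ^ (k + 1) * \<i> :: complex"
  let ?F = "\<lambda>x. indicator (Omega k a) x *\<^sub>R vprod w k x"
  let ?Y = "\<Pi>\<^sub>M j\<in>{1..2 * k}. lborel :: real measure"
  have F: "integrable (\<Pi>\<^sub>M j\<in>{..2 * k}. lborel) ?F" by (rule integrable_Omega_vprod[OF w])
  have integrand: "indicator (Omega k a) x *\<^sub>R smat (?E (alt k x)) (vprod v k x) = smat (?E (alt k x)) (?F x)" for x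
  proof (cases "x \<in> Omega k a")
    case True
    then have "vprod v k x = vprod w k x"
      using Omega_bounds(1)[of x k a] by (intro vprod_cong v_eq_w) auto
    then show ?thesis using True by (simp add: smat_scaleR)
  qed (simp add: smat_scaleR)
  have "integrable (\<Pi>\<^sub>M j\<in>{..2 * k}. lborel) (\<lambda>x. smat (?E (alt k x)) (?F x))"
  proof (rule Bochner_Integration.integrable_bound[OF F])
    have "alt k \<in> borel_measurable (\<Pi>\<^sub>M j\<in>{..2 * k}. lborel)"
      unfolding alt_def[abs_def] by measurable
    then show "(\<lambda>x. smat (?E (alt k x)) (?F x)) \<in> borel_measurable (\<Pi>\<^sub>M j\<in>{..2 * k}. lborel)"
      using F by measurable
    show "AE x in \<Pi>\<^sub>M j\<in>{..2 * k}. lborel. norm (smat (?E (alt k x)) (?F x)) \<le> norm (?F x)"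
    proof (intro AE_I2)
      fix x
      show "norm (smat (?E (alt k x)) (?F x)) \<le> norm (?F x)"
        using Omega_bounds(2)[of x k a] norm_exp_upper_half_plane_le[of "alt k x" z] z
        by (cases "x \<in> Omega k a") (auto simp: norm_smat intro!: mult_left_le_one_le)
    qed
  qed
  then have "Modd k a v z = smat ?c (LINT t|lborel. LINT y|?Y. smat (?E t) (?F (alt_param k t y)))"
    unfolding Modd_def integrand by (simp add: integral_alt_slices)
  also have "\<dots> = smat ?c (LINT t|lborel. smat (?E t) (LINT y|?Y. ?F (alt_param k t y)))"
    by (simp add: integral_smat)
  also have "\<dots> = (LINT t|lborel. smat (?E t) (kernel a w k t))"
    by (subst integral_smat[symmetric]) (simp_all add: kernel_def smat_smat mult.commute)
  finally show ?thesis .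
qed

lemma integral_eq_set_integral_Ioo:
  fixes g :: "real \<Rightarrow> 'b::{banach, second_countable_topology}"
  assumes "g \<in> borel_measurable lborel" and "\<And>t. t \<notin> {l..u} \<Longrightarrow> g t = 0"
  shows "(LINT t|lborel. g t) = (LINT t:{l<..<u}|lborel. g t)"
  unfolding set_lebesgue_integral_def
proof (rule integral_cong_AE)
  show "AE t in lborel. g t = indicator {l<..<u} t *\<^sub>R g t"
    using AE_lborel_singleton[of l] AE_lborel_singleton[of u]
    by eventually_elim (use assms(2) in \<open>auto simp: indicator_def\<close>)
qed (use assms(1) in auto)

lemma represents_kernel:
  assumes w: "w \<in> borel_measurable lborel" "integrable lborel (\<lambda>t. norm (w t))"
    and v_eq_w: "\<And>t. t \<in> {0..a} \<Longrightarrow> v t = w t"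
  shows "represents k a v (kernel a w k)"
  unfolding represents_def
proof (intro conjI allI impI)
  have K: "integrable lborel (kernel a w k)" by (rule integrable_kernel[OF w])
  then show "set_integrable lborel {0<..<real (k + 1) * a} (kernel a w k)"
    unfolding set_integrable_def by (rule integrable_mult_indicator[rotated]) simp
  fix z :: complex assume "0 < Im z"
  then have "Modd k a v z = (LINT t|lborel. smat (exp (2 * \<i> * z * complex_of_real t)) (kernel a w k t))"
    by (intro Modd_eq_kernel_transform w v_eq_w) auto
  also have "\<dots> = (LINT t:{0<..<real (k + 1) * a}|lborel. smat (exp (2 * \<i> * z * complex_of_real t)) (kernel a w k t))"
    using K by (intro integral_eq_set_integral_Ioo) (auto simp: kernel_eq_0)
  finally show "Modd k a v z = (LINT t:{0<..<real (k + 1) * a}|lborel. smat (exp (2 * \<i> * z * complex_of_real t)) (kernel a w k t))" .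
qed

(* The paper's f_k, by kernel_vhat below. *)
definition slice_volume :: "real \<Rightarrow> nat \<Rightarrow> real \<Rightarrow> real" where
  "slice_volume a k t = (LINT y|(\<Pi>\<^sub>M j\<in>{1..2 * k}. lborel). indicator (Omega k a) (alt_param k t y))"

lemma integrable_Omega_slice:
  "integrable (\<Pi>\<^sub>M j\<in>{1..2 * k}. lborel) (\<lambda>y. indicator (Omega k a) (alt_param k t y) :: real)"
proof (rule integrable_PiM_prod_bound[where h = "indicator {0..a}" and C = 1])
  show "(\<lambda>y. indicator (Omega k a) (alt_param k t y) :: real) \<in> borel_measurable (\<Pi>\<^sub>M j\<in>{1..2 * k}. lborel)"
    using measurable_alt_param by measurable
  fix y
  show "norm (indicator (Omega k a) (alt_param k t y) :: real) \<le> 1 * (\<Prod>j\<in>{1..2 * k}. indicator {0..a} (y j))"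
  proof (cases "alt_param k t y \<in> Omega k a")
    case True
    then have "y j \<in> {0..a}" if "j \<in> {1..2 * k}" for j
      using Omega_bounds(1)[OF True, of j] that by (auto simp: alt_param_def)
    then show ?thesis by (simp add: indicator_def)
  qed (simp add: prod_nonneg)
qed (auto simp: integrable_indicator_iff emeasure_lborel_Icc_eq)

lemma kernel_opnorm_le:
  assumes c: "\<And>s. s \<in> {0..a} \<Longrightarrow> opnorm (w s) \<le> c"
  shows "opnorm (kernel a w k t) \<le> c ^ (2 * k + 1) * slice_volume a k t"
proof -
  have c_nonneg: "0 \<le> c" if "x \<in> Omega k a" for x
    using c[of "x 0"] Omega_bounds(1)[OF that, of 0] opnorm_nonneg order_trans by blast
  have "opnorm (indicator (Omega k a) x *\<^sub>R vprod w k x) \<le> c ^ (2 * k + 1) * indicator (Omega k a) x" for x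
  proof (cases "x \<in> Omega k a")
    case True
    have "opnorm (vprod w k x) \<le> (\<Prod>j\<le>2 * k. opnorm (w (x j)))" by (rule vprod_opnorm_le)
    also have "\<dots> \<le> (\<Prod>j\<le>2 * k. c)"
      using Omega_bounds(1)[OF True] by (intro prod_mono) (auto simp: opnorm_nonneg c)
    finally show ?thesis using True by simp
  qed simp
  then have integral_bound: "opnorm (LINT y|(\<Pi>\<^sub>M j\<in>{1..2 * k}. lborel). indicator (Omega k a) (alt_param k t y) *\<^sub>R vprod w k (alt_param k t y))
      \<le> c ^ (2 * k + 1) * slice_volume a k t"
    unfolding slice_volume_def
    by (subst integral_mult_right_zero[symmetric]) (intro opnorm_integral_le integrable_mult_right integrable_Omega_slice)
  have "opnorm (kernel a w k t) \<le> cmod ((-1) ^ (k + 1) * \<i>)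
      * opnorm (LINT y|(\<Pi>\<^sub>M j\<in>{1..2 * k}. lborel). indicator (Omega k a) (alt_param k t y) *\<^sub>R vprod w k (alt_param k t y))"
    unfolding kernel_def by (rule opnorm_smat_le)
  then show ?thesis
    using integral_bound by (simp add: norm_mult norm_power)
qed

lemma vhat_eq_indicator: "vhat a x = indicator {0..a} x *\<^sub>R (\<chi> i j. \<i>)"
  by (simp add: vhat_def)

lemma borel_measurable_vhat: "vhat a \<in> borel_measurable lborel"
  unfolding vhat_eq_indicator[abs_def] by measurable

lemma integrable_norm_vhat: "integrable lborel (\<lambda>x. norm (vhat a x))"
proof -
  have "norm (\<chi> (i::1) (j::1). \<i>) = 1"
    by (simp add: norm_vec_def L2_set_def UNIV_1)
  then have "(\<lambda>x. norm (vhat a x)) = indicator {0..a}"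
    by (auto simp: vhat_eq_indicator indicator_def)
  then show ?thesis by (simp add: integrable_indicator_iff emeasure_lborel_Icc_eq)
qed

lemma vprod_vhat:
  assumes "\<And>j. j \<le> 2 * k \<Longrightarrow> x j \<in> {0..a}"
  shows "vprod (vhat a) k x = (\<chi> i j. - \<i>)"
  using assms by (induction k) (auto simp: vhat_def cadj_def vec_eq_iff matrix_matrix_mult_def UNIV_1)

lemma kernel_vhat: "(-1) ^ (k + 1) * kernel a (vhat a) k t $ 1 $ 1 = complex_of_real (slice_volume a k t)"
proof -
  have integrand: "indicator (Omega k a) x *\<^sub>R vprod (vhat a) k x = indicator (Omega k a) x *\<^sub>R (\<chi> i j. - \<i>)" for x
    using Omega_bounds(1)[of x k a] by (cases "x \<in> Omega k a") (simp_all add: vprod_vhat)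
  have "kernel a (vhat a) k t = smat ((-1) ^ (k + 1) * \<i>) (slice_volume a k t *\<^sub>R (\<chi> i j. - \<i>))"
    unfolding kernel_def slice_volume_def integrand by (subst integral_scaleR_left[OF integrable_Omega_slice]) (rule refl)
  then have "kernel a (vhat a) k t $ 1 $ 1 = (-1) ^ (k + 1) * complex_of_real (slice_volume a k t)"
    by (simp add: smat_def) (simp add: scaleR_conv_of_real mult_ac)
  moreover have "((-1) ^ (k + 1) * (-1) ^ (k + 1) :: complex) = 1"
    by (simp flip: power_mult_distrib)
  ultimately show ?thesis
    by (simp only: mult.assoc[symmetric]) simp
qed

lemma kernel_opnorm_le_scalar_model:
  assumes Ahat: "represents k a (vhat a) Ahat" and c: "\<And>s. s \<in> {0..a} \<Longrightarrow> opnorm (w s) \<le> c"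
  shows "AE t in lborel. t \<in> {0<..<real (k + 1) * a} \<longrightarrow>
    (let f = (-1) ^ (k + 1) * (Ahat t $ 1 $ 1) in f \<in> \<real> \<and> opnorm (kernel a w k t) \<le> c ^ (2 * k + 1) * Re f)"
proof -
  have "AE t in lborel. t \<in> {0<..<real (k + 1) * a} \<longrightarrow> Ahat t = kernel a (vhat a) k t"
    using represents_kernel[OF borel_measurable_vhat integrable_norm_vhat refl] Ahat by (rule represents_unique)
  then show ?thesis
  proof (rule eventually_mono, intro impI)
    fix t assume "t \<in> {0<..<real (k + 1) * a} \<longrightarrow> Ahat t = kernel a (vhat a) k t"
      and "t \<in> {0<..<real (k + 1) * a}"
    then have "(-1) ^ (k + 1) * (Ahat t $ 1 $ 1) = complex_of_real (slice_volume a k t)"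
      using kernel_vhat[where a = a and k = k and t = t] by simp
    then show "let f = (-1) ^ (k + 1) * (Ahat t $ 1 $ 1) in
        f \<in> \<real> \<and> opnorm (kernel a w k t) \<le> c ^ (2 * k + 1) * Re f"
      using kernel_opnorm_le[OF c, where k = k and t = t] by (simp only: Let_def) simp
  qed
qed

lemma
  fixes v :: "real \<Rightarrow> 'b::{real_normed_vector, second_countable_topology}"
  assumes a: "0 \<le> a" and v_meas: "set_borel_measurable lborel {0<..} v"
    and v_L2: "set_integrable lborel {0<..} (\<lambda>x. (norm (v x))\<^sup>2)"
  shows borel_measurable_restrict_Icc: "(\<lambda>t. indicator {0..a} t *\<^sub>R v t) \<in> borel_measurable lborel"
    and integrable_norm_restrict_Icc: "integrable lborel (\<lambda>t. norm (indicator {0..a} t *\<^sub>R v t))"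
proof -
  \<comment> \<open>\<open>v\<close> is only known to be measurable on \<open>{0<..}\<close>; its value at \<open>0\<close> is added separately.\<close>
  have [measurable]: "(\<lambda>t. indicator {0<..} t *\<^sub>R v t) \<in> borel_measurable borel"
    using v_meas unfolding set_borel_measurable_def by simp
  have "(\<lambda>t. indicator {0..a} t *\<^sub>R v t) = (\<lambda>t. indicator {0..a} t *\<^sub>R (indicator {0<..} t *\<^sub>R v t) + indicator {0} t *\<^sub>R v 0)"
    using a by (auto simp: fun_eq_iff indicator_def)
  then show meas: "(\<lambda>t. indicator {0..a} t *\<^sub>R v t) \<in> borel_measurable lborel"
    by (simp only:) measurable
  show "integrable lborel (\<lambda>t. norm (indicator {0..a} t *\<^sub>R v t))"
  proof (rule Bochner_Integration.integrable_bound)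
    show "integrable lborel (\<lambda>t. indicator {0..a} t + indicator {0<..} t * (norm (v t))\<^sup>2 :: real)"
      using v_L2 unfolding set_integrable_def
      by (intro Bochner_Integration.integrable_add) (auto simp: integrable_indicator_iff emeasure_lborel_Icc_eq)
    have le_sq: "norm (v t) \<le> 1 + (norm (v t))\<^sup>2" for t
      using zero_le_power2[of "norm (v t) - 1"] by (simp add: power2_diff) (use norm_ge_zero[of "v t"] in linarith)
    show "AE t in lborel. norm (norm (indicator {0..a} t *\<^sub>R v t))
        \<le> norm (indicator {0..a} t + indicator {0<..} t * (norm (v t))\<^sup>2 :: real)"
      using AE_lborel_singleton[of 0] by eventually_elim (use le_sq in \<open>auto simp: indicator_def\<close>)
  qed (use meas in measurable)
qed

theorem lemmaA4:
  fixes k :: nat and a :: real and v :: "real \<Rightarrow> complex ^ 'm2 ^ 'm1"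
  assumes a_pos: "a > 0"
    and v_meas: "set_borel_measurable lborel {0<..} v"
    and v_L2: "set_integrable lborel {0<..} (\<lambda>x. (norm (v x))\<^sup>2)"
    and v_supp: "AE x in lborel. x > a \<longrightarrow> v x = 0"
  shows "\<exists>A. represents k a v A \<and>
           (\<forall>B. represents k a v B \<longrightarrow>
              (AE \<alpha> in lborel. \<alpha> \<in> {0<..<real (k + 1) * a} \<longrightarrow> B \<alpha> = A \<alpha>)) \<and>
           (\<forall>c::real. c > 0 \<and> continuous_on {0..a} v \<and> (\<forall>x\<in>{0..a}. opnorm (v x) \<le> c) \<longrightarrow>
              (\<forall>Ahat. represents k a (vhat a) Ahat \<longrightarrow>
                 (AE \<alpha> in lborel. \<alpha> \<in> {0<..<real (k + 1) * a} \<longrightarrow>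
                    (let f = (-1) ^ (k + 1) * (Ahat \<alpha> $ 1 $ 1) in
                       f \<in> \<real> \<and> opnorm (A \<alpha>) \<le> c ^ (2 * k + 1) * Re f))))"
proof -
  define w where "w t = indicator {0..a} t *\<^sub>R v t" for t
  have w: "w \<in> borel_measurable lborel" "integrable lborel (\<lambda>t. norm (w t))"
    unfolding w_def[abs_def] using a_pos
    by (intro borel_measurable_restrict_Icc[OF _ v_meas v_L2] integrable_norm_restrict_Icc[OF _ v_meas v_L2]; simp)+
  have v_eq_w: "v t = w t" if "t \<in> {0..a}" for t
    using that by (simp add: w_def)
  \<comment> \<open>Only the values of \<open>v\<close> on \<open>[0,a]\<close> enter.\<close>
  show ?thesis
  proof (intro exI[of _ "kernel a w k"] conjI allI impI)
    show "represents k a v (kernel a w k)"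
      by (rule represents_kernel[OF w v_eq_w])
    then show "AE t in lborel. t \<in> {0<..<real (k + 1) * a} \<longrightarrow> B t = kernel a w k t"
      if "represents k a v B" for B
      using that by (rule represents_unique)
    fix c Ahat
    assume "c > 0 \<and> continuous_on {0..a} v \<and> (\<forall>x\<in>{0..a}. opnorm (v x) \<le> c)"
      and "represents k a (vhat a) Ahat"
    then show "AE t in lborel. t \<in> {0<..<real (k + 1) * a} \<longrightarrow>
        (let f = (-1) ^ (k + 1) * (Ahat t $ 1 $ 1) in f \<in> \<real> \<and> opnorm (kernel a w k t) \<le> c ^ (2 * k + 1) * Re f)"
      by (intro kernel_opnorm_le_scalar_model) (auto simp flip: v_eq_w)
  qed
qed

end
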